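(* Let $M\le N$ and $\mathbf{A}\in\mathbb{R}^{M\times N}$ with full row rank. Let $\lambda>0$ and let $\rho:\mathbb{R}^{M\times M}\to\mathbb{R}$ be differentiable and $\mu$-strongly convex ($\mu>0$). Fix constants $K>0$ and $c>0$ and let $\mathcal{P}_{K,c}$ be the set of probability distributions $\pi$ of pairs $(\mathbf{x},\mathbf{y})\in\mathbb{R}^N\times\mathbb{R}^M$ with $\mathbb{E}_\pi\|\mathbf{x}\|_2^2\le K$, $\mathbb{E}_\pi\|\mathbf{y}\|_2^2\le K$, and $\mathbb{E}_\pi[\mathbf{y}\mathbf{y}^\top]\succeq c\,\mathbf{I}$. For $\pi\in\mathcal{P}_{K,c}$ let $\mathbf{B}^\ast_\pi$ be the unique minimizer over $\mathbf{B}\in\mathbb{R}^{M\times M}$ of $F_\pi(\mathbf{B})=\mathbb{E}_\pi\|\mathbf{A}^\top\mathbf{B}\mathbf{y}-\mathbf{x}\|_2^2+\lambda\rho(\mathbf{B})$. Then there is a constant $C>0$, depending on $\mathbf{A},K,c,\mu$ and $\nabla\rho(\mathbf{0})$ but not on $\lambda$, such that for all $\pi,\pi'\in\mathcal{P}_{K,c}$, $$\|\mathbf{B}^\ast_\pi-\mathbf{B}^\ast_{\pi'}\|_F\le\frac{C}{\lambda\mu}\,W_2(\pi,\pi').$$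
   Context: $\|\cdot\|_F$ is the Frobenius norm and $\nabla\rho$ is the gradient with respect to the Frobenius inner product; $\rho$ is $\mu$-strongly convex if $\rho-\frac{\mu}{2}\|\cdot\|_F^2$ is convex. $W_2$ denotes the 2-Wasserstein distance between probability distributions on $\mathbb{R}^N\times\mathbb{R}^M\cong\mathbb{R}^{N+M}$ with the Euclidean norm: $W_2(\pi,\pi')^2=\inf\mathbb{E}\|(\mathbf{x},\mathbf{y})-(\mathbf{x}',\mathbf{y}')\|_2^2$ over all couplings of $\pi$ and $\pi'$. *)

theory Defs
  imports "HOL-Probability.Probability"
begin

definition outer :: "real^'m \<Rightarrow> real^'m^'m" where
  "outer y = (\<chi> i j. y $ i * y $ j)"

definition loewner_ge :: "real^'m^'m \<Rightarrow> real^'m^'m \<Rightarrow> bool" where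
  "loewner_ge S T \<longleftrightarrow> (\<forall>v. v \<bullet> ((S - T) *v v) \<ge> 0)"

definition P_Kc :: "real \<Rightarrow> real \<Rightarrow> ((real^'n) \<times> (real^'m)) measure set" where
  "P_Kc K c = {\<pi>. prob_space \<pi> \<and> sets \<pi> = sets borel \<and>
      (\<integral>\<^sup>+ p. ennreal ((norm (fst p))\<^sup>2) \<partial>\<pi>) \<le> ennreal K \<and>
      (\<integral>\<^sup>+ p. ennreal ((norm (snd p))\<^sup>2) \<partial>\<pi>) \<le> ennreal K \<and>
      integrable \<pi> (\<lambda>p. outer (snd p)) \<and>
      loewner_ge (integral\<^sup>L \<pi> (\<lambda>p. outer (snd p))) (c *\<^sub>R mat 1)}"

definition Fobj :: "real^'n^'m \<Rightarrow> real \<Rightarrow> (real^'m^'m \<Rightarrow> real)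
    \<Rightarrow> ((real^'n) \<times> (real^'m)) measure \<Rightarrow> real^'m^'m \<Rightarrow> real" where
  "Fobj A lam rho \<pi> B =
     (\<integral>p. (norm (transpose A *v (B *v snd p) - fst p))\<^sup>2 \<partial>\<pi>) + lam * rho B"

definition couplings :: "('a::topological_space) measure \<Rightarrow> 'a measure \<Rightarrow> ('a \<times> 'a) measure set" where
  "couplings \<pi> \<pi>' = {\<gamma>. prob_space \<gamma> \<and> sets \<gamma> = sets borel \<and>
      distr \<gamma> borel fst = \<pi> \<and> distr \<gamma> borel snd = \<pi>'}"

text \<open>2-Wasserstein distance (Euclidean norm on the pair space R^N x R^M = R^(N+M)).\<close>
definition W2 :: "('a::euclidean_space) measure \<Rightarrow> 'a measure \<Rightarrow> real" where
  "W2 \<pi> \<pi>' = sqrt (enn2real (INF \<gamma>\<in>couplings \<pi> \<pi>'.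
       \<integral>\<^sup>+ pq. ennreal ((norm (fst pq - snd pq))\<^sup>2) \<partial>\<gamma>))"

end

theory Submission
  imports Defs
begin

text \<open>
  Strong convexity of \<open>\<lambda> \<rho>\<close> gives quadratic
  growth \<open>F\<^sub>\<pi>(B) - F\<^sub>\<pi>(B\<^sub>\<pi>) \<ge> \<lambda>\<mu>/4 \<parallel>B - B\<^sub>\<pi>\<parallel>\<^sup>2\<close>. Adding this inequality for \<open>\<pi>\<close> at \<open>B\<^sub>\<pi>\<^sub>'\<close> and for
  \<open>\<pi>'\<close> at \<open>B\<^sub>\<pi>\<close>, the penalty terms cancel, so \<open>\<lambda>\<mu>/2 \<parallel>d\<parallel>\<^sup>2 \<le> E\<^sub>\<pi> \<phi> - E\<^sub>\<pi>\<^sub>' \<phi>\<close>, where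
  \<open>d = B\<^sub>\<pi>\<^sub>' - B\<^sub>\<pi>\<close> and \<open>\<phi>\<close> is the difference of the two squared residuals.

  Comparing a minimiser with \<open>B = 0\<close>, and using \<open>E[y y\<^sup>T] \<succeq> c I\<close> and the injectivity of \<open>A\<^sup>T\<close>,
  bounds all minimisers by a constant \<open>R\<close> that does not depend on \<open>\<lambda>\<close>. The function \<open>\<phi>\<close> is the
  inner product of two linear functions of the data point \<open>p = (x, y)\<close>, so
  \<open>|\<phi>(p) - \<phi>(q)| \<le> L \<parallel>d\<parallel> \<parallel>p - q\<parallel> (\<parallel>p\<parallel> + \<parallel>q\<parallel>)\<close> with \<open>L\<close> depending only on \<open>A\<close> and \<open>R\<close>. Integrating
  this against a coupling of \<open>\<pi>\<close> and \<open>\<pi>'\<close> and using the second-moment bound \<open>K\<close> gives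
  \<open>E\<^sub>\<pi> \<phi> - E\<^sub>\<pi>\<^sub>' \<phi> \<le> 2 L \<parallel>d\<parallel> \<surd>(2K) W\<^sub>2(\<pi>, \<pi>')\<close>; dividing by \<open>\<parallel>d\<parallel>\<close> proves the theorem.
\<close>

lemma continuous_on_matrix_vector_mult [continuous_intros]:
  "continuous_on S f \<Longrightarrow> continuous_on S (\<lambda>x. (M::real^'a^'b) *v f x)"
  by (rule bounded_linear.continuous_on[OF matrix_vector_mul_bounded_linear])

lemma norm_vec_squared: "(norm (v::'a::real_normed_vector^'n))\<^sup>2 = (\<Sum>i\<in>UNIV. (norm (v $ i))\<^sup>2)"
  by (simp add: norm_vec_def L2_set_def sum_nonneg)

lemma norm_matrix_vector_mult_le: "norm ((M::real^'a^'b) *v x) \<le> norm M * norm x"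
proof -
  have "(norm (M *v x))\<^sup>2 = (\<Sum>i\<in>UNIV. (M $ i \<bullet> x)\<^sup>2)"
    by (simp add: norm_vec_squared matrix_mult_dot)
  also have "\<dots> \<le> (\<Sum>i\<in>UNIV. (norm (M $ i) * norm x)\<^sup>2)"
    by (intro sum_mono, subst abs_le_square_iff[symmetric]) (simp add: Cauchy_Schwarz_ineq2 abs_mult)
  also have "\<dots> = (norm M * norm x)\<^sup>2"
    by (simp add: power_mult_distrib norm_vec_squared[of M] sum_distrib_right)
  finally show ?thesis
    by (rule power2_le_imp_le) simp
qed

lemma norm_matrix_pair_le:
  fixes T :: "real^'a^'b" and B :: "real^'c^'a" and p :: "(real^'b) \<times> (real^'c)"
  shows "norm (T *v (B *v snd p) - s *\<^sub>R fst p) \<le> (norm T * norm B + \<bar>s\<bar>) * norm p"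
proof -
  have "norm (T *v (B *v snd p) - s *\<^sub>R fst p) \<le> norm T * (norm B * norm (snd p)) + \<bar>s\<bar> * norm (fst p)"
    using norm_triangle_ineq4[of "T *v (B *v snd p)" "s *\<^sub>R fst p"]
      order_trans[OF norm_matrix_vector_mult_le mult_left_mono[OF norm_matrix_vector_mult_le]]
    by (smt (verit) norm_ge_zero norm_scaleR)
  also have "\<dots> \<le> norm T * (norm B * norm p) + \<bar>s\<bar> * norm p"
    using norm_fst_le[of "fst p" "snd p"] norm_snd_le[of "snd p" "fst p"]
    by (intro add_mono mult_left_mono) auto
  finally show ?thesis
    by (simp add: algebra_simps)
qed

lemma inner_linear_diff_le:
  fixes u v :: "'a::real_normed_vector \<Rightarrow> 'b::real_inner"
  assumes "linear u" "linear v" "\<And>p. norm (u p) \<le> a * norm p" "\<And>p. norm (v p) \<le> b * norm p"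
  shows "\<bar>u p \<bullet> v p - u q \<bullet> v q\<bar> \<le> a * b * norm (p - q) * (norm p + norm q)"
proof -
  have "u p \<bullet> v p - u q \<bullet> v q = u (p - q) \<bullet> v p + u q \<bullet> v (p - q)"
    by (simp add: linear_diff[OF assms(1)] linear_diff[OF assms(2)] inner_diff_left inner_diff_right)
  then have "\<bar>u p \<bullet> v p - u q \<bullet> v q\<bar> \<le> norm (u (p - q)) * norm (v p) + norm (u q) * norm (v (p - q))"
    using Cauchy_Schwarz_ineq2[of "u (p - q)" "v p"] Cauchy_Schwarz_ineq2[of "u q" "v (p - q)"] by linarith
  also have "\<dots> \<le> (a * norm (p - q)) * (b * norm p) + (a * norm q) * (b * norm (p - q))"
    using assms(3,4) by (intro add_mono mult_mono) (auto intro: order_trans[OF norm_ge_zero])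
  also have "\<dots> = a * b * norm (p - q) * (norm p + norm q)"
    by (simp add: algebra_simps)
  finally show ?thesis .
qed

lemma square_add_le: "(a + b)\<^sup>2 \<le> 2 * a\<^sup>2 + 2 * (b::real)\<^sup>2"
  using zero_le_power2[of "a - b"] unfolding power2_sum power2_diff by linarith

lemma norm_diff_squared_le: "(norm (a - b))\<^sup>2 \<le> 2 * (norm a)\<^sup>2 + 2 * (norm (b::'a::real_normed_vector))\<^sup>2"
  by (rule order_trans[OF power_mono[OF norm_triangle_ineq4] square_add_le]) simp

lemma norm_convex_combination_squared:
  "(norm ((1 - u) *\<^sub>R v + u *\<^sub>R (w::'a::real_inner)))\<^sup>2
     = (1 - u) * (norm v)\<^sup>2 + u * (norm w)\<^sup>2 - u * (1 - u) * (norm (v - w))\<^sup>2"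
  by (simp add: power2_norm_eq_inner inner_add_left inner_add_right inner_diff_left inner_diff_right
      inner_commute algebra_simps)

lemma mult_le_weighted_squares:
  fixes a b t :: real
  assumes "t > 0"
  shows "a * b \<le> t / 2 * a\<^sup>2 + b\<^sup>2 / (2 * t)"
proof -
  have "0 \<le> (t * a - b)\<^sup>2"
    by simp
  then have "2 * t * (a * b) \<le> t\<^sup>2 * a\<^sup>2 + b\<^sup>2"
    by (simp add: power2_diff power_mult_distrib)
  then have "2 * t * (a * b) \<le> 2 * t * (t / 2 * a\<^sup>2 + b\<^sup>2 / (2 * t))"
    using assms by (simp add: algebra_simps power2_eq_square)
  then show ?thesis
    using assms by simp
qed

lemma norm_diff_mult_norm_add_le:
  fixes p q :: "'a::real_normed_vector"
  assumes "t > 0"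
  shows "norm (p - q) * (norm p + norm q) \<le> t / 2 * (norm (p - q))\<^sup>2 + ((norm p)\<^sup>2 + (norm q)\<^sup>2) / t"
proof -
  have "norm (p - q) * (norm p + norm q) \<le> t / 2 * (norm (p - q))\<^sup>2 + (norm p + norm q)\<^sup>2 / (2 * t)"
    by (rule mult_le_weighted_squares[OF assms])
  also have "\<dots> \<le> t / 2 * (norm (p - q))\<^sup>2 + (2 * (norm p)\<^sup>2 + 2 * (norm q)\<^sup>2) / (2 * t)"
    using square_add_le assms by (intro add_left_mono divide_right_mono) auto
  finally show ?thesis
    using assms by (simp add: field_simps)
qed

lemma le_two_sqrt_mult_if_forall_pos:
  fixes x a b :: real
  assumes le: "\<And>t. t > 0 \<Longrightarrow> x \<le> t * a + b / t" and "a \<ge> 0" "b \<ge> 0"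
  shows "x \<le> 2 * sqrt (a * b)"
proof (cases "x > 0")
  case True
  have "x\<^sup>2 \<le> 4 * (a * b)"
  proof (cases "a = 0")
    case True
    have "x \<le> b / (2 * (b + 1) / x)"
      using le[of "2 * (b + 1) / x"] \<open>x > 0\<close> \<open>b \<ge> 0\<close> True by simp
    also have "\<dots> < x"
      using \<open>x > 0\<close> \<open>b \<ge> 0\<close> by (auto simp: field_simps intro: add_nonneg_pos)
    finally show ?thesis by simp
  next
    case False
    then have "x \<le> x / 2 + 2 * a * b / x"
      using le[of "x / (2 * a)"] \<open>x > 0\<close> \<open>a \<ge> 0\<close> by (simp add: field_simps)
    then show ?thesis
      using \<open>x > 0\<close> by (simp add: field_simps power2_eq_square)
  qed
  then show ?thesis
    using real_le_rsqrt[of x "4 * (a * b)"] by (simp add: real_sqrt_mult)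
next
  case False
  then show ?thesis
    using assms by (simp add: order_trans[of x 0])
qed

lemma quadratic_inequality_bound:
  fixes b \<kappa> lam \<mu> G K :: real
  assumes le: "\<kappa> / 2 * b\<^sup>2 + lam * (\<mu> / 2 * b\<^sup>2 - G * b) \<le> 2 * K"
    and "b \<ge> 0" "\<kappa> > 0" "lam \<ge> 0" "\<mu> > 0" "G \<ge> 0" "K \<ge> 0"
  shows "b \<le> 2 * G / \<mu> + sqrt (4 * K / \<kappa>)"
proof (cases "b \<le> 2 * G / \<mu>")
  case True
  then show ?thesis
    using assms by (simp add: add_increasing2)
next
  case False
  then have "\<mu> * b - 2 * G \<ge> 0"
    using assms by (simp add: field_simps)
  then have "0 \<le> b * (\<mu> * b - 2 * G) / 2"
    using \<open>b \<ge> 0\<close> by simp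
  also have "\<dots> = \<mu> / 2 * b\<^sup>2 - G * b"
    by (simp add: power2_eq_square field_simps)
  finally have "0 \<le> lam * (\<mu> / 2 * b\<^sup>2 - G * b)"
    using \<open>lam \<ge> 0\<close> by simp
  then have "\<kappa> / 2 * b\<^sup>2 \<le> 2 * K"
    using le by linarith
  then have "\<kappa> * b\<^sup>2 \<le> 4 * K"
    by simp
  then have "b \<le> sqrt (4 * K / \<kappa>)"
    using assms by (intro real_le_rsqrt) (simp add: field_simps)
  moreover have "G / \<mu> \<ge> 0"
    using assms by simp
  ultimately show ?thesis
    by linarith
qed

section \<open>Strong convexity\<close>

lemma convex_on_scaleR_line:
  assumes "convex_on UNIV f"
  shows "convex_on UNIV (\<lambda>t::real. f (t *\<^sub>R x))"
proof (rule convex_onI)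
  fix s t u :: real assume "0 < u" "u < 1"
  then show "f (((1 - u) *\<^sub>R s + u *\<^sub>R t) *\<^sub>R x) \<le> (1 - u) * f (s *\<^sub>R x) + u * f (t *\<^sub>R x)"
    using convex_onD[OF assms, of u "s *\<^sub>R x" "t *\<^sub>R x"] by (simp add: scaleR_add_left)
qed auto

text \<open>On the line through \<open>B\<close> this is the one-dimensional tangent inequality for the
  convex function \<open>\<rho> - \<mu>/2 \<parallel>\<cdot>\<parallel>\<^sup>2\<close>.\<close>
lemma strongly_convex_above_tangent:
  fixes \<rho> :: "'a::real_normed_vector \<Rightarrow> real"
  assumes cvx: "convex_on UNIV (\<lambda>B. \<rho> B - \<mu> / 2 * (norm B)\<^sup>2)"
    and der: "(\<rho> has_derivative D) (at 0)"
  shows "\<rho> 0 + D B + \<mu> / 2 * (norm B)\<^sup>2 \<le> \<rho> B"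
proof -
  define h where "h t = \<rho> (t *\<^sub>R B) - \<mu> / 2 * (norm (t *\<^sub>R B))\<^sup>2" for t :: real
  have "(\<rho> has_derivative D) (at ((\<lambda>t. t *\<^sub>R B) 0))"
    using der by simp
  then have "((\<lambda>t. \<rho> (t *\<^sub>R B)) has_derivative (\<lambda>t. D (t *\<^sub>R B))) (at 0)"
    by (rule has_derivative_compose[OF bounded_linear_imp_has_derivative[OF bounded_linear_scaleR_left]])
  moreover have "D (t *\<^sub>R B) = t * D B" for t
    using linear_cmul[OF has_derivative_linear[OF der]] by simp
  ultimately have "((\<lambda>t. \<rho> (t *\<^sub>R B)) has_field_derivative D B) (at 0)"
    by (simp add: has_field_derivative_def mult_commute_abs)
  moreover have "((\<lambda>t. \<mu> / 2 * (norm (t *\<^sub>R B))\<^sup>2) has_field_derivative 0) (at 0)"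
    unfolding norm_scaleR power_mult_distrib power2_abs
    by (auto intro!: derivative_eq_intros)
  ultimately have "(h has_field_derivative D B) (at 0 within UNIV)"
    unfolding h_def by (auto intro: derivative_eq_intros)
  moreover have "convex_on UNIV h"
    unfolding h_def using convex_on_scaleR_line[OF cvx] .
  ultimately have "D B * (1 - 0) \<le> h 1 - h 0"
    by (intro convex_on_imp_above_tangent) auto
  then show ?thesis
    by (simp add: h_def)
qed

lemma quadratic_growth_at_minimizer:
  fixes \<Phi> \<rho> :: "'a::real_inner \<Rightarrow> real"
  assumes "convex_on UNIV \<Phi>" "convex_on UNIV (\<lambda>B. \<rho> B - \<mu> / 2 * (norm B)\<^sup>2)" "lam \<ge> 0"
    and min: "\<And>B. \<Phi> B1 + lam * \<rho> B1 \<le> \<Phi> B + lam * \<rho> B"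
  shows "lam * \<mu> / 4 * (norm (B - B1))\<^sup>2 \<le> (\<Phi> B + lam * \<rho> B) - (\<Phi> B1 + lam * \<rho> B1)"
proof -
  define m where "m = (1 - 1/2) *\<^sub>R B1 + (1/2::real) *\<^sub>R B"
  have "\<Phi> m \<le> \<Phi> B1 / 2 + \<Phi> B / 2"
    using convex_onD[OF assms(1), of "1/2" B1 B] by (simp add: m_def)
  moreover have "\<rho> m - \<mu> / 2 * (norm m)\<^sup>2 \<le> (\<rho> B1 - \<mu> / 2 * (norm B1)\<^sup>2) / 2 + (\<rho> B - \<mu> / 2 * (norm B)\<^sup>2) / 2"
    using convex_onD[OF assms(2), of "1/2" B1 B] by (simp add: m_def)
  moreover have mid: "(norm m)\<^sup>2 = (norm B1)\<^sup>2 / 2 + (norm B)\<^sup>2 / 2 - (norm (B - B1))\<^sup>2 / 4"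
    unfolding m_def norm_convex_combination_squared by (simp add: norm_minus_commute)
  moreover have "\<mu> / 2 * (norm m)\<^sup>2 = \<mu> / 4 * (norm B1)\<^sup>2 + \<mu> / 4 * (norm B)\<^sup>2 - \<mu> / 8 * (norm (B - B1))\<^sup>2"
    unfolding mid by (simp add: algebra_simps)
  ultimately have "\<rho> m \<le> \<rho> B1 / 2 + \<rho> B / 2 - \<mu> / 8 * (norm (B - B1))\<^sup>2"
    by (simp add: field_simps)
  then have "lam * \<rho> m \<le> lam * (\<rho> B1 / 2 + \<rho> B / 2 - \<mu> / 8 * (norm (B - B1))\<^sup>2)"
    using assms(3) by (rule mult_left_mono)
  with min[of m] \<open>\<Phi> m \<le> \<Phi> B1 / 2 + \<Phi> B / 2\<close> show ?thesis
    by (simp add: algebra_simps)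
qed

section \<open>Couplings and the Wasserstein distance\<close>

lemma borel_measurable_continuous_on_sets:
  assumes "sets M = sets borel" "continuous_on UNIV f"
  shows "f \<in> borel_measurable M"
  using measurable_cong_sets[OF assms(1) refl] borel_measurable_continuous_onI[OF assms(2)] by blast

definition second_moment :: "'a::real_normed_vector measure \<Rightarrow> ennreal" where
  "second_moment M = (\<integral>\<^sup>+p. ennreal ((norm p)\<^sup>2) \<partial>M)"

lemma integrable_quadratic_growth:
  fixes f :: "'a::real_normed_vector \<Rightarrow> real"
  assumes "finite_measure M" "sets M = sets borel" "continuous_on UNIV f"
    and moment: "second_moment M < \<infinity>"
    and growth: "\<And>p. \<bar>f p\<bar> \<le> a + b * (norm p)\<^sup>2"
  shows "integrable M f"
proof (rule Bochner_Integration.integrable_bound[where f = "\<lambda>p. a + b * (norm p)\<^sup>2"])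
  have [measurable]: "(\<lambda>p. (norm p)\<^sup>2) \<in> borel_measurable M"
    by (rule borel_measurable_continuous_on_sets[OF assms(2)]) (intro continuous_intros)
  have "integrable M (\<lambda>p. (norm p)\<^sup>2)"
    using moment by (intro integrableI_bounded) (auto simp: second_moment_def)
  then show "integrable M (\<lambda>p. a + b * (norm p)\<^sup>2)"
    by (intro Bochner_Integration.integrable_add integrable_mult_right
        finite_measure.integrable_const[OF assms(1)])
  show "f \<in> borel_measurable M"
    by (rule borel_measurable_continuous_on_sets[OF assms(2,3)])
  show "AE p in M. norm (f p) \<le> norm (a + b * (norm p)\<^sup>2)"
    using growth by (auto intro: order_trans[OF _ abs_ge_self])
qed

definition transport_cost :: "('a::real_normed_vector \<times> 'a) measure \<Rightarrow> ennreal" where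
  "transport_cost \<gamma> = (\<integral>\<^sup>+z. ennreal ((norm (fst z - snd z))\<^sup>2) \<partial>\<gamma>)"

lemma W2_eq: "W2 \<pi> \<pi>' = sqrt (enn2real (INF \<gamma>\<in>couplings \<pi> \<pi>'. transport_cost \<gamma>))"
  by (simp add: W2_def transport_cost_def)

lemma W2_nonneg: "W2 \<pi> \<pi>' \<ge> 0"
  by (simp add: W2_def)

lemma coupling_marginals:
  fixes \<pi> \<pi>' :: "'a::euclidean_space measure"
  assumes "\<gamma> \<in> couplings \<pi> \<pi>'"
  shows "fst \<in> \<gamma> \<rightarrow>\<^sub>M borel" "snd \<in> \<gamma> \<rightarrow>\<^sub>M borel" "prob_space \<pi>" "prob_space \<pi>'"
    "sets \<pi> = sets borel" "sets \<pi>' = sets borel"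
proof -
  have \<gamma>: "prob_space \<gamma>" "sets \<gamma> = sets borel" "distr \<gamma> borel fst = \<pi>" "distr \<gamma> borel snd = \<pi>'"
    using assms by (auto simp: couplings_def)
  show fst: "fst \<in> \<gamma> \<rightarrow>\<^sub>M borel" and snd: "snd \<in> \<gamma> \<rightarrow>\<^sub>M borel"
    by (intro borel_measurable_continuous_on_sets[OF \<gamma>(2)] continuous_intros)+
  show "prob_space \<pi>" "prob_space \<pi>'"
    using prob_space.prob_space_distr[OF \<gamma>(1) fst] prob_space.prob_space_distr[OF \<gamma>(1) snd] \<gamma>(3,4)
    by simp_all
  show "sets \<pi> = sets borel" "sets \<pi>' = sets borel"
    using \<gamma>(3,4) by auto
qed

lemma coupling_integrals:
  fixes f :: "'a::euclidean_space \<Rightarrow> real"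
  assumes \<gamma>: "\<gamma> \<in> couplings \<pi> \<pi>'" and f: "f \<in> borel_measurable borel"
  shows "integrable \<pi> f \<longleftrightarrow> integrable \<gamma> (\<lambda>z. f (fst z))" "integral\<^sup>L \<pi> f = (\<integral>z. f (fst z) \<partial>\<gamma>)"
    "integrable \<pi>' f \<longleftrightarrow> integrable \<gamma> (\<lambda>z. f (snd z))" "integral\<^sup>L \<pi>' f = (\<integral>z. f (snd z) \<partial>\<gamma>)"
  using integrable_distr_eq[OF coupling_marginals(1)[OF \<gamma>] f] integral_distr[OF coupling_marginals(1)[OF \<gamma>] f]
    integrable_distr_eq[OF coupling_marginals(2)[OF \<gamma>] f] integral_distr[OF coupling_marginals(2)[OF \<gamma>] f] \<gamma>
  by (simp_all add: couplings_def)

lemma coupling_nn_integrals: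
  fixes h :: "'a::euclidean_space \<Rightarrow> ennreal"
  assumes \<gamma>: "\<gamma> \<in> couplings \<pi> \<pi>'" and h: "h \<in> borel_measurable borel"
  shows "integral\<^sup>N \<pi> h = (\<integral>\<^sup>+z. h (fst z) \<partial>\<gamma>)" "integral\<^sup>N \<pi>' h = (\<integral>\<^sup>+z. h (snd z) \<partial>\<gamma>)"
  using nn_integral_distr[OF coupling_marginals(1)[OF \<gamma>], of h] nn_integral_distr[OF coupling_marginals(2)[OF \<gamma>], of h]
    h \<gamma> by (simp_all add: couplings_def)

lemma coupling_cost_le:
  fixes \<pi> \<pi>' :: "'a::euclidean_space measure"
  assumes \<gamma>: "\<gamma> \<in> couplings \<pi> \<pi>'"
  shows "transport_cost \<gamma>
    \<le> 2 * second_moment \<pi> + 2 * second_moment \<pi>'"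
proof -
  have sq: "(\<lambda>p::'a. ennreal ((norm p)\<^sup>2)) \<in> borel_measurable borel"
    by (intro measurable_compose[OF _ measurable_ennreal] borel_measurable_continuous_onI continuous_intros)
  have meas: "(\<lambda>z. ennreal ((norm (fst z))\<^sup>2)) \<in> borel_measurable \<gamma>"
    "(\<lambda>z. ennreal ((norm (snd z))\<^sup>2)) \<in> borel_measurable \<gamma>"
    using measurable_compose[OF coupling_marginals(1)[OF \<gamma>] sq]
      measurable_compose[OF coupling_marginals(2)[OF \<gamma>] sq] by simp_all
  have "transport_cost \<gamma>
      \<le> (\<integral>\<^sup>+z. 2 * ennreal ((norm (fst z))\<^sup>2) + 2 * ennreal ((norm (snd z))\<^sup>2) \<partial>\<gamma>)"
    unfolding transport_cost_def
    by (intro nn_integral_mono order_trans[OF ennreal_leI[OF norm_diff_squared_le]])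
      (simp add: ennreal_plus ennreal_mult)
  also have "\<dots> = 2 * (\<integral>\<^sup>+z. ennreal ((norm (fst z))\<^sup>2) \<partial>\<gamma>) + 2 * (\<integral>\<^sup>+z. ennreal ((norm (snd z))\<^sup>2) \<partial>\<gamma>)"
    using meas by (simp add: nn_integral_add nn_integral_cmult borel_measurable_times_ennreal)
  also have "\<dots> = 2 * second_moment \<pi> + 2 * second_moment \<pi>'"
    by (simp add: second_moment_def coupling_nn_integrals[OF \<gamma> sq])
  finally show ?thesis .
qed

lemma coupling_second_moments:
  fixes \<pi> \<pi>' :: "'a::euclidean_space measure"
  assumes \<gamma>: "\<gamma> \<in> couplings \<pi> \<pi>'"
    and moments: "second_moment \<pi> \<le> ennreal M" "second_moment \<pi>' \<le> ennreal M"
    and "M \<ge> 0"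
  shows "integrable \<gamma> (\<lambda>z. (norm (fst z))\<^sup>2)" "integrable \<gamma> (\<lambda>z. (norm (snd z))\<^sup>2)"
    "(\<integral>z. (norm (fst z))\<^sup>2 \<partial>\<gamma>) \<le> M" "(\<integral>z. (norm (snd z))\<^sup>2 \<partial>\<gamma>) \<le> M"
proof -
  have sq_cont: "continuous_on UNIV (\<lambda>p::'a. (norm p)\<^sup>2)"
    by (intro continuous_intros)
  note marg = coupling_marginals[OF \<gamma>]
    and sq_integrals = coupling_integrals[OF \<gamma> borel_measurable_continuous_onI[OF sq_cont]]
  have "integrable \<pi> (\<lambda>p. (norm p)\<^sup>2)" "integrable \<pi>' (\<lambda>p. (norm p)\<^sup>2)"
    using moments marg(3-6)
    by (auto intro!: integrable_quadratic_growth[where a = 0 and b = 1, OF prob_space.finite_measure]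
        sq_cont dest: le_less_trans[OF _ ennreal_less_top])
  then show "integrable \<gamma> (\<lambda>z. (norm (fst z))\<^sup>2)" "integrable \<gamma> (\<lambda>z. (norm (snd z))\<^sup>2)"
    using sq_integrals by simp_all
  have "(\<integral>p. (norm p)\<^sup>2 \<partial>\<pi>) \<le> M" "(\<integral>p. (norm p)\<^sup>2 \<partial>\<pi>') \<le> M"
    using moments \<open>M \<ge> 0\<close> by (simp_all add: integral_real_bounded second_moment_def)
  then show "(\<integral>z. (norm (fst z))\<^sup>2 \<partial>\<gamma>) \<le> M" "(\<integral>z. (norm (snd z))\<^sup>2 \<partial>\<gamma>) \<le> M"
    using sq_integrals by simp_all
qed

lemma distr_pair_snd:
  assumes "prob_space M" "prob_space N"
  shows "distr (N \<Otimes>\<^sub>M M) M snd = M"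
proof (intro measure_eqI)
  fix A assume "A \<in> sets (distr (N \<Otimes>\<^sub>M M) M snd)"
  then have A: "A \<in> sets M" by simp
  have "emeasure (distr (N \<Otimes>\<^sub>M M) M snd) A = emeasure (N \<Otimes>\<^sub>M M) (space N \<times> A)"
    using A by (auto simp: emeasure_distr space_pair_measure dest: sets.sets_into_space
        intro!: arg_cong2[where f = emeasure])
  also have "\<dots> = emeasure N (space N) * emeasure M A"
    using A prob_space_imp_sigma_finite[OF assms(1)] by (simp add: sigma_finite_measure.emeasure_pair_measure_Times)
  finally show "emeasure (distr (N \<Otimes>\<^sub>M M) M snd) A = emeasure M A"
    using prob_space.emeasure_space_1[OF assms(2)] by simp
qed simp

lemma product_coupling:
  fixes \<pi> \<pi>' :: "'a::euclidean_space measure"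
  assumes "prob_space \<pi>" "prob_space \<pi>'" "sets \<pi> = sets borel" "sets \<pi>' = sets borel"
  shows "\<pi> \<Otimes>\<^sub>M \<pi>' \<in> couplings \<pi> \<pi>'"
proof -
  have "distr (\<pi> \<Otimes>\<^sub>M \<pi>') borel fst = distr (\<pi> \<Otimes>\<^sub>M \<pi>') \<pi> fst"
    by (rule distr_cong) (auto simp: assms(3))
  also have "\<dots> = \<pi>"
    by (rule prob_space.distr_pair_fst[OF assms(2)])
  finally have "distr (\<pi> \<Otimes>\<^sub>M \<pi>') borel fst = \<pi>" .
  moreover have "distr (\<pi> \<Otimes>\<^sub>M \<pi>') borel snd = distr (\<pi> \<Otimes>\<^sub>M \<pi>') \<pi>' snd"
    by (rule distr_cong) (auto simp: assms(4))
  moreover have "sets (\<pi> \<Otimes>\<^sub>M \<pi>') = sets borel"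
    using sets_pair_measure_cong[OF assms(3,4)] borel_prod by metis
  ultimately show ?thesis
    using distr_pair_snd[OF assms(2,1)] prob_space_pair[OF assms(1,2)] by (simp add: couplings_def)
qed

text \<open>The finiteness hypothesis matters: \<open>W2\<close> reads an infinite infimum as \<open>enn2real \<infinity> = 0\<close>.\<close>
lemma sqrt_le_W2:
  fixes \<pi> \<pi>' :: "'a::euclidean_space measure"
  assumes fin: "\<exists>\<gamma>\<in>couplings \<pi> \<pi>'. transport_cost \<gamma> < \<infinity>"
    and le: "\<And>\<gamma>. \<gamma> \<in> couplings \<pi> \<pi>' \<Longrightarrow> ennreal a \<le> transport_cost \<gamma>"
    and "a \<ge> 0"
  shows "sqrt a \<le> W2 \<pi> \<pi>'"
proof -
  define I where "I = (INF \<gamma>\<in>couplings \<pi> \<pi>'. transport_cost \<gamma>)"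
  have "ennreal a \<le> I"
    unfolding I_def by (rule INF_greatest) (rule le)
  moreover have "I < \<infinity>"
    using fin unfolding I_def by (auto intro: INF_lower le_less_trans)
  ultimately have "a \<le> enn2real I"
    using enn2real_mono[of "ennreal a" I] \<open>a \<ge> 0\<close> by simp
  then show ?thesis
    unfolding W2_eq I_def by simp
qed

lemma le_W2I:
  fixes \<pi> \<pi>' :: "'a::euclidean_space measure"
  assumes fin: "\<exists>\<gamma>\<in>couplings \<pi> \<pi>'. transport_cost \<gamma> < \<infinity>"
    and le: "\<And>\<gamma> r. \<gamma> \<in> couplings \<pi> \<pi>' \<Longrightarrow> transport_cost \<gamma> = ennreal r
      \<Longrightarrow> r \<ge> 0 \<Longrightarrow> x \<le> C * sqrt r"
    and "C \<ge> 0"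
  shows "x \<le> C * W2 \<pi> \<pi>'"
proof (cases "x > 0")
  case True
  obtain \<gamma>\<^sub>0 where \<gamma>\<^sub>0: "\<gamma>\<^sub>0 \<in> couplings \<pi> \<pi>'"
    and "transport_cost \<gamma>\<^sub>0 < \<infinity>"
    using fin by blast
  then obtain r\<^sub>0 where "transport_cost \<gamma>\<^sub>0 = ennreal r\<^sub>0" "r\<^sub>0 \<ge> 0"
    by (cases "transport_cost \<gamma>\<^sub>0" rule: ennreal_cases) auto
  then have "x \<le> C * sqrt r\<^sub>0"
    by (rule le[OF \<gamma>\<^sub>0])
  with True \<open>C \<ge> 0\<close> have "C > 0"
    by (cases "C = 0") auto
  have "ennreal ((x / C)\<^sup>2) \<le> transport_cost \<gamma>"
    if \<gamma>: "\<gamma> \<in> couplings \<pi> \<pi>'" for \<gamma>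
  proof (cases "transport_cost \<gamma>" rule: ennreal_cases)
    case (real r)
    then have "x / C \<le> sqrt r"
      using le[OF \<gamma>] \<open>C > 0\<close> by (simp add: field_simps)
    then have "(x / C)\<^sup>2 \<le> (sqrt r)\<^sup>2"
      using \<open>x > 0\<close> \<open>C > 0\<close> by (intro power_mono) auto
    then show ?thesis
      using real by (simp add: ennreal_leI)
  qed simp
  then have "sqrt ((x / C)\<^sup>2) \<le> W2 \<pi> \<pi>'"
    by (intro sqrt_le_W2[OF fin]) auto
  then have "x / C \<le> W2 \<pi> \<pi>'"
    using \<open>x > 0\<close> \<open>C > 0\<close> by simp
  then show ?thesis
    using \<open>C > 0\<close> by (simp add: field_simps)
next
  case False
  then show ?thesis
    using mult_nonneg_nonneg[OF \<open>C \<ge> 0\<close> W2_nonneg, of \<pi> \<pi>'] by linarith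
qed

lemma integral_diff_le_coupling_cost:
  fixes \<phi> :: "'a::euclidean_space \<Rightarrow> real"
  assumes \<gamma>: "\<gamma> \<in> couplings \<pi> \<pi>'"
    and moments: "second_moment \<pi> \<le> ennreal M" "second_moment \<pi>' \<le> ennreal M"
    and "M \<ge> 0" and cont: "continuous_on UNIV \<phi>"
    and lip: "\<And>p q. \<bar>\<phi> p - \<phi> q\<bar> \<le> L * norm (p - q) * (norm p + norm q)" and "L \<ge> 0"
    and cost: "transport_cost \<gamma> = ennreal r" "r \<ge> 0"
    and "t > 0"
  shows "(\<integral>p. \<phi> p \<partial>\<pi>) - (\<integral>p. \<phi> p \<partial>\<pi>') \<le> L * (t / 2 * r + 2 * M / t)"
proof -
  note marg = coupling_marginals[OF \<gamma>]
    and integrals = coupling_integrals[OF \<gamma> borel_measurable_continuous_onI[OF cont]]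
    and sq = coupling_second_moments[OF \<gamma> moments \<open>M \<ge> 0\<close>]
  have "\<bar>\<phi> p\<bar> \<le> \<bar>\<phi> 0\<bar> + L * (norm p)\<^sup>2" for p
    using lip[of p 0] by (simp add: power2_eq_square)
  then have "integrable \<pi> \<phi>" "integrable \<pi>' \<phi>"
    using moments marg(3-6)
    by (auto intro!: integrable_quadratic_growth[OF prob_space.finite_measure] cont
        dest: le_less_trans[OF _ ennreal_less_top])
  then have int_\<phi>: "integrable \<gamma> (\<lambda>z. \<phi> (fst z))" "integrable \<gamma> (\<lambda>z. \<phi> (snd z))"
    using integrals by simp_all
  have cost_meas: "(\<lambda>z. (norm (fst z - snd z))\<^sup>2) \<in> borel_measurable \<gamma>"
    using marg(1,2) by measurable
  then have int_cost: "integrable \<gamma> (\<lambda>z. (norm (fst z - snd z))\<^sup>2)"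
    using cost by (intro integrableI_bounded) (auto simp: transport_cost_def)
  have E_cost: "(\<integral>z. (norm (fst z - snd z))\<^sup>2 \<partial>\<gamma>) = r"
    using integral_eq_nn_integral[OF cost_meas] cost by (simp add: transport_cost_def)
  have pointwise: "\<phi> p - \<phi> q \<le> L * (t / 2 * (norm (p - q))\<^sup>2 + ((norm p)\<^sup>2 + (norm q)\<^sup>2) / t)" for p q
    using lip[of p q] mult_left_mono[OF norm_diff_mult_norm_add_le[OF \<open>t > 0\<close>] \<open>L \<ge> 0\<close>, of p q]
    by (simp add: mult.assoc)
  have "(\<integral>p. \<phi> p \<partial>\<pi>) - (\<integral>p. \<phi> p \<partial>\<pi>') = (\<integral>z. \<phi> (fst z) - \<phi> (snd z) \<partial>\<gamma>)"
    using integrals int_\<phi> by simp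
  also have "\<dots> \<le> (\<integral>z. L * (t / 2 * (norm (fst z - snd z))\<^sup>2 + ((norm (fst z))\<^sup>2 + (norm (snd z))\<^sup>2) / t) \<partial>\<gamma>)"
    using int_\<phi> sq(1,2) int_cost pointwise by (intro integral_mono) auto
  also have "\<dots> = L * (t / 2 * r + ((\<integral>z. (norm (fst z))\<^sup>2 \<partial>\<gamma>) + (\<integral>z. (norm (snd z))\<^sup>2 \<partial>\<gamma>)) / t)"
    using sq(1,2) int_cost E_cost by simp
  also have "\<dots> \<le> L * (t / 2 * r + (M + M) / t)"
    using sq(3,4) \<open>L \<ge> 0\<close> \<open>t > 0\<close> by (intro mult_left_mono add_left_mono divide_right_mono add_mono) auto
  finally show ?thesis
    by simp
qed

lemma integral_diff_le_W2:
  fixes \<phi> :: "'a::euclidean_space \<Rightarrow> real"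
  assumes "prob_space \<pi>" "prob_space \<pi>'" "sets \<pi> = sets borel" "sets \<pi>' = sets borel"
    and moments: "second_moment \<pi> \<le> ennreal M" "second_moment \<pi>' \<le> ennreal M"
    and "M \<ge> 0" and cont: "continuous_on UNIV \<phi>"
    and lip: "\<And>p q. \<bar>\<phi> p - \<phi> q\<bar> \<le> L * norm (p - q) * (norm p + norm q)" and "L \<ge> 0"
  shows "(\<integral>p. \<phi> p \<partial>\<pi>) - (\<integral>p. \<phi> p \<partial>\<pi>') \<le> 2 * L * sqrt M * W2 \<pi> \<pi>'"
proof (rule le_W2I)
  have "transport_cost (\<pi> \<Otimes>\<^sub>M \<pi>')
      \<le> 2 * second_moment \<pi> + 2 * second_moment \<pi>'"
    by (rule coupling_cost_le[OF product_coupling[OF assms(1-4)]])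
  also have "\<dots> \<le> 2 * ennreal M + 2 * ennreal M"
    using moments by (intro add_mono mult_left_mono) auto
  also have "\<dots> < \<infinity>"
    by (simp add: ennreal_mult_less_top)
  finally show "\<exists>\<gamma>\<in>couplings \<pi> \<pi>'. transport_cost \<gamma> < \<infinity>"
    using product_coupling[OF assms(1-4)] by blast
next
  fix \<gamma> r
  assume \<gamma>: "\<gamma> \<in> couplings \<pi> \<pi>'" and cost: "transport_cost \<gamma> = ennreal r"
    and "r \<ge> 0"
  have "(\<integral>p. \<phi> p \<partial>\<pi>) - (\<integral>p. \<phi> p \<partial>\<pi>') \<le> t * (L * r / 2) + 2 * L * M / t" if "t > 0" for t
    using integral_diff_le_coupling_cost[OF \<gamma> moments \<open>M \<ge> 0\<close> cont lip \<open>L \<ge> 0\<close> cost \<open>r \<ge> 0\<close> that]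
    by (simp add: algebra_simps)
  then have "(\<integral>p. \<phi> p \<partial>\<pi>) - (\<integral>p. \<phi> p \<partial>\<pi>') \<le> 2 * sqrt (L * r / 2 * (2 * L * M))"
    using \<open>L \<ge> 0\<close> \<open>M \<ge> 0\<close> \<open>r \<ge> 0\<close> by (intro le_two_sqrt_mult_if_forall_pos) auto
  also have "\<dots> = 2 * L * sqrt M * sqrt r"
    using \<open>L \<ge> 0\<close> by (simp add: real_sqrt_mult power2_eq_square[symmetric] mult_ac)
  finally show "(\<integral>p. \<phi> p \<partial>\<pi>) - (\<integral>p. \<phi> p \<partial>\<pi>') \<le> 2 * L * sqrt M * sqrt r" .
qed (use \<open>L \<ge> 0\<close> \<open>M \<ge> 0\<close> in simp)

section \<open>The regularised least-squares objective\<close>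

lemma second_moment_P_Kc:
  assumes "\<pi> \<in> P_Kc K c"
  shows "second_moment \<pi> \<le> ennreal (2 * K)"
proof -
  have sets: "sets \<pi> = sets borel" using assms by (simp add: P_Kc_def)
  have [measurable]: "(\<lambda>p. (norm (fst p))\<^sup>2) \<in> borel_measurable \<pi>" "(\<lambda>p. (norm (snd p))\<^sup>2) \<in> borel_measurable \<pi>"
    by (intro borel_measurable_continuous_on_sets[OF sets] continuous_intros)+
  have "second_moment \<pi> =
      (\<integral>\<^sup>+p. ennreal ((norm (fst p))\<^sup>2) \<partial>\<pi>) + (\<integral>\<^sup>+p. ennreal ((norm (snd p))\<^sup>2) \<partial>\<pi>)"
    by (simp add: second_moment_def norm_prod_def nn_integral_add)
  also have "\<dots> \<le> ennreal K + ennreal K"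
    using assms unfolding P_Kc_def by (auto intro: add_mono)
  also have "\<dots> \<le> ennreal (2 * K)"
    by (cases "K \<ge> 0") (auto simp: ennreal_neg simp flip: ennreal_plus)
  finally show ?thesis .
qed

lemma integrable_P_Kc_norm_squared:
  assumes "\<pi> \<in> P_Kc K c" "continuous_on UNIV f" "\<And>p. norm (f p) \<le> C * norm p"
  shows "integrable \<pi> (\<lambda>p. (norm (f p))\<^sup>2)"
proof (rule integrable_quadratic_growth)
  show "finite_measure \<pi>" "sets \<pi> = sets borel"
    using assms(1) by (auto simp: P_Kc_def intro: prob_space.finite_measure)
  show "second_moment \<pi> < \<infinity>"
    using second_moment_P_Kc[OF assms(1)] by (simp add: le_less_trans)
  show "\<bar>(norm (f p))\<^sup>2\<bar> \<le> 0 + C\<^sup>2 * (norm p)\<^sup>2" for p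
    using power_mono[OF assms(3)[of p]] by (simp add: power_mult_distrib)
qed (intro continuous_intros assms(2))

definition sq_residual :: "real^'n^'m \<Rightarrow> real^'m^'m \<Rightarrow> (real^'n) \<times> (real^'m) \<Rightarrow> real" where
  "sq_residual A B p = (norm (transpose A *v (B *v snd p) - fst p))\<^sup>2"

lemma Fobj_eq: "Fobj A lam rho \<pi> B = (\<integral>p. sq_residual A B p \<partial>\<pi>) + lam * rho B"
  by (simp add: Fobj_def sq_residual_def)

lemma integrable_sq_residual:
  assumes "\<pi> \<in> P_Kc K c"
  shows "integrable \<pi> (sq_residual A B)"
proof -
  have "integrable \<pi> (\<lambda>p. (norm (transpose A *v (B *v snd p) - 1 *\<^sub>R fst p))\<^sup>2)"
    by (rule integrable_P_Kc_norm_squared[OF assms _ norm_matrix_pair_le]) (intro continuous_intros)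
  then show ?thesis
    by (simp add: sq_residual_def[abs_def])
qed

lemma convex_on_integral_sq_residual:
  fixes A :: "real^'n^'m" and \<pi> :: "((real^'n) \<times> (real^'m)) measure"
  assumes "\<pi> \<in> P_Kc K c"
  shows "convex_on UNIV (\<lambda>B. \<integral>p. sq_residual A B p \<partial>\<pi>)"
proof (rule convex_onI)
  fix u :: real and B1 B2 :: "real^'m^'m"
  assume u: "0 < u" "u < 1"
  have "sq_residual A ((1 - u) *\<^sub>R B1 + u *\<^sub>R B2) p \<le> (1 - u) * sq_residual A B1 p + u * sq_residual A B2 p"
    for p
  proof -
    have "transpose A *v (((1 - u) *\<^sub>R B1 + u *\<^sub>R B2) *v snd p) - fst p
        = (1 - u) *\<^sub>R (transpose A *v (B1 *v snd p) - fst p) + u *\<^sub>R (transpose A *v (B2 *v snd p) - fst p)"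
      by (simp add: matrix_vector_mult_add_rdistrib matrix_vector_right_distrib matrix_vector_mult_scaleR
          scaleR_matrix_vector_assoc[symmetric] algebra_simps)
    then show ?thesis
      using u unfolding sq_residual_def by (simp add: norm_convex_combination_squared)
  qed
  then have "(\<integral>p. sq_residual A ((1 - u) *\<^sub>R B1 + u *\<^sub>R B2) p \<partial>\<pi>)
      \<le> (\<integral>p. (1 - u) * sq_residual A B1 p + u * sq_residual A B2 p \<partial>\<pi>)"
    using integrable_sq_residual[OF assms] by (intro integral_mono) auto
  also have "\<dots> = (1 - u) * (\<integral>p. sq_residual A B1 p \<partial>\<pi>) + u * (\<integral>p. sq_residual A B2 p \<partial>\<pi>)"
    using integrable_sq_residual[OF assms] by simp
  finally show "(\<integral>p. sq_residual A ((1 - u) *\<^sub>R B1 + u *\<^sub>R B2) p \<partial>\<pi>)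
      \<le> (1 - u) * (\<integral>p. sq_residual A B1 p \<partial>\<pi>) + u * (\<integral>p. sq_residual A B2 p \<partial>\<pi>)" .
qed auto

lemma outer_quadratic_form: "w \<bullet> (outer y *v w) = (y \<bullet> w)\<^sup>2"
proof -
  have "outer y *v w = (y \<bullet> w) *\<^sub>R y"
    by (simp add: vec_eq_iff outer_def matrix_vector_mult_def inner_vec_def sum_distrib_left algebra_simps)
  then show ?thesis
    by (simp add: power2_eq_square inner_commute)
qed

lemma integral_norm_matrix_snd_ge:
  fixes B :: "real^'m^'m" and \<pi> :: "((real^'n) \<times> (real^'m)) measure"
  assumes "\<pi> \<in> P_Kc K c"
  shows "c * (norm B)\<^sup>2 \<le> (\<integral>p. (norm (B *v snd p))\<^sup>2 \<partial>\<pi>)"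
proof -
  define \<Sigma> where "\<Sigma> = (\<integral>p. outer (snd p) \<partial>\<pi>)"
  have int: "integrable \<pi> (\<lambda>p. outer (snd p))" and loewner: "loewner_ge \<Sigma> (c *\<^sub>R mat 1)"
    using assms by (auto simp: P_Kc_def \<Sigma>_def)
  have "linear (\<lambda>S::real^'m^'m. \<Sum>i\<in>UNIV. B $ i \<bullet> (S *v B $ i))"
    by (intro linearI)
      (simp_all add: matrix_vector_mult_add_rdistrib scaleR_matrix_vector_assoc[symmetric] inner_add_right
        sum.distrib sum_distrib_left)
  then have bl: "bounded_linear (\<lambda>S::real^'m^'m. \<Sum>i\<in>UNIV. B $ i \<bullet> (S *v B $ i))"
    by (simp add: linear_conv_bounded_linear)
  have "(norm (B *v y))\<^sup>2 = (\<Sum>i\<in>UNIV. B $ i \<bullet> (outer y *v B $ i))" for y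
    unfolding outer_quadratic_form by (simp add: norm_vec_squared matrix_mult_dot inner_commute)
  then have "(\<integral>p. (norm (B *v snd p))\<^sup>2 \<partial>\<pi>) = (\<Sum>i\<in>UNIV. B $ i \<bullet> (\<Sigma> *v B $ i))"
    unfolding \<Sigma>_def using integral_bounded_linear[OF bl int] by simp
  also have "\<dots> \<ge> (\<Sum>i\<in>UNIV. c * (norm (B $ i))\<^sup>2)"
  proof (rule sum_mono)
    fix i
    have "0 \<le> B $ i \<bullet> ((\<Sigma> - c *\<^sub>R mat 1) *v B $ i)"
      using loewner unfolding loewner_ge_def by blast
    then show "c * (norm (B $ i))\<^sup>2 \<le> B $ i \<bullet> (\<Sigma> *v B $ i)"
      by (simp add: matrix_vector_mult_diff_rdistrib scaleR_matrix_vector_assoc[symmetric] inner_diff_right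
          power2_norm_eq_inner)
  qed
  finally show ?thesis
    by (simp add: norm_vec_squared[of B] sum_distrib_left)
qed

lemma integral_norm_matrix_matrix_snd_ge:
  fixes T :: "real^'m^'n" and B :: "real^'m^'m" and \<pi> :: "((real^'n) \<times> (real^'m)) measure"
  assumes P: "\<pi> \<in> P_Kc K c" and s: "\<And>v. s * norm v \<le> norm (T *v v)" "s \<ge> 0"
  shows "c * s\<^sup>2 * (norm B)\<^sup>2 \<le> (\<integral>p. (norm (T *v (B *v snd p)))\<^sup>2 \<partial>\<pi>)"
proof -
  have "integrable \<pi> (\<lambda>p. (norm (T *v (B *v snd p) - 0 *\<^sub>R fst p))\<^sup>2)"
    by (intro integrable_P_Kc_norm_squared[OF P _ norm_matrix_pair_le] continuous_intros)
  moreover have "norm (B *v snd p) \<le> norm B * norm p" for p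
    using order_trans[OF norm_matrix_vector_mult_le mult_left_mono[OF norm_snd_le[of "snd p" "fst p"]]] by simp
  then have "integrable \<pi> (\<lambda>p. (norm (B *v snd p))\<^sup>2)"
    by (intro integrable_P_Kc_norm_squared[OF P] continuous_intros)
  ultimately have int: "integrable \<pi> (\<lambda>p. (norm (T *v (B *v snd p)))\<^sup>2)" "integrable \<pi> (\<lambda>p. (norm (B *v snd p))\<^sup>2)"
    by simp_all
  have "c * s\<^sup>2 * (norm B)\<^sup>2 \<le> s\<^sup>2 * (\<integral>p. (norm (B *v snd p))\<^sup>2 \<partial>\<pi>)"
    using mult_left_mono[OF integral_norm_matrix_snd_ge[OF P, of B], of "s\<^sup>2"] by (simp add: algebra_simps)
  also have "\<dots> = (\<integral>p. (s * norm (B *v snd p))\<^sup>2 \<partial>\<pi>)"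
    by (simp add: power_mult_distrib)
  also have "\<dots> \<le> (\<integral>p. (norm (T *v (B *v snd p)))\<^sup>2 \<partial>\<pi>)"
    using int s by (intro integral_mono power_mono) (auto simp: power_mult_distrib)
  finally show ?thesis .
qed

lemma integral_sq_residual_ge:
  fixes A :: "real^'n^'m" and \<pi> :: "((real^'n) \<times> (real^'m)) measure"
  assumes P: "\<pi> \<in> P_Kc K c" and "K \<ge> 0" and s: "s \<ge> 0" "\<And>v. s * norm v \<le> norm (transpose A *v v)"
  shows "c * s\<^sup>2 * (norm B)\<^sup>2 / 2 - K \<le> (\<integral>p. sq_residual A B p \<partial>\<pi>)"
proof -
  define u where "u p = transpose A *v (B *v snd p)" for p :: "(real^'n) \<times> (real^'m)"
  have "integrable \<pi> (\<lambda>p. (norm (u p - 0 *\<^sub>R fst p))\<^sup>2)"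
    unfolding u_def by (intro integrable_P_Kc_norm_squared[OF P _ norm_matrix_pair_le] continuous_intros)
  then have int_u: "integrable \<pi> (\<lambda>p. (norm (u p))\<^sup>2)"
    by simp
  have int_x: "integrable \<pi> (\<lambda>p. (norm (fst p))\<^sup>2)"
    by (intro integrable_P_Kc_norm_squared[OF P, where C = 1] continuous_intros)
      (metis norm_fst_le prod.collapse mult_1)
  have "(\<integral>p. (norm (fst p))\<^sup>2 \<partial>\<pi>) \<le> K"
    using P \<open>K \<ge> 0\<close> by (simp add: P_Kc_def integral_real_bounded)
  moreover have "c * s\<^sup>2 * (norm B)\<^sup>2 \<le> (\<integral>p. (norm (u p))\<^sup>2 \<partial>\<pi>)"
    unfolding u_def using s by (intro integral_norm_matrix_matrix_snd_ge[OF P])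
  ultimately have "c * s\<^sup>2 * (norm B)\<^sup>2 / 2 - K \<le> (\<integral>p. (norm (u p))\<^sup>2 / 2 - (norm (fst p))\<^sup>2 \<partial>\<pi>)"
    using int_u int_x by simp
  also have "\<dots> \<le> (\<integral>p. sq_residual A B p \<partial>\<pi>)"
  proof (rule integral_mono)
    show "integrable \<pi> (\<lambda>p. (norm (u p))\<^sup>2 / 2 - (norm (fst p))\<^sup>2)"
      using int_u int_x by simp
    show "(norm (u p))\<^sup>2 / 2 - (norm (fst p))\<^sup>2 \<le> sq_residual A B p" for p
      using norm_diff_squared_le[of "u p - fst p" "- fst p"] by (simp add: u_def sq_residual_def)
  qed (rule integrable_sq_residual[OF P])
  finally show ?thesis .
qed

text \<open>Relative to \<open>B = 0\<close>, the penalty can lower the objective by at most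
  \<open>\<lambda> (\<parallel>g\<parallel> \<parallel>B1\<parallel> - \<mu>/2 \<parallel>B1\<parallel>\<^sup>2)\<close>, which is negative once \<open>\<parallel>B1\<parallel> > 2\<parallel>g\<parallel>/\<mu>\<close>; beyond that
  threshold the data term alone bounds \<open>\<parallel>B1\<parallel>\<close>. Hence the bound is uniform in \<open>\<lambda>\<close>.\<close>
lemma norm_minimizer_le:
  fixes A :: "real^'n^'m" and \<pi> :: "((real^'n) \<times> (real^'m)) measure"
  assumes P: "\<pi> \<in> P_Kc K c" and "K \<ge> 0" "c > 0" "lam \<ge> 0" "\<mu> > 0"
    and s: "s > 0" "\<And>v. s * norm v \<le> norm (transpose A *v v)"
    and cvx: "convex_on UNIV (\<lambda>B. rho B - \<mu> / 2 * (norm B)\<^sup>2)"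
    and der: "(rho has_derivative (\<lambda>H. g \<bullet> H)) (at 0)"
    and min: "\<And>B. Fobj A lam rho \<pi> B1 \<le> Fobj A lam rho \<pi> B"
  shows "norm B1 \<le> 2 * norm g / \<mu> + sqrt (4 * K / (c * s\<^sup>2))"
proof (rule quadratic_inequality_bound)
  have "rho 0 + g \<bullet> B1 + \<mu> / 2 * (norm B1)\<^sup>2 \<le> rho B1"
    by (rule strongly_convex_above_tangent[OF cvx der])
  then have "\<mu> / 2 * (norm B1)\<^sup>2 - norm g * norm B1 \<le> rho B1 - rho 0"
    using Cauchy_Schwarz_ineq2[of g B1] by linarith
  then have "lam * (\<mu> / 2 * (norm B1)\<^sup>2 - norm g * norm B1) \<le> lam * (rho B1 - rho 0)"
    using \<open>lam \<ge> 0\<close> by (rule mult_left_mono)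
  moreover have "(\<integral>p. sq_residual A B1 p \<partial>\<pi>) + lam * rho B1 \<le> (\<integral>p. (norm (fst p))\<^sup>2 \<partial>\<pi>) + lam * rho 0"
    using min[of 0] by (simp add: Fobj_eq sq_residual_def)
  moreover have "(\<integral>p. (norm (fst p))\<^sup>2 \<partial>\<pi>) \<le> K"
    using P \<open>K \<ge> 0\<close> by (simp add: P_Kc_def integral_real_bounded)
  ultimately show "c * s\<^sup>2 / 2 * (norm B1)\<^sup>2 + lam * (\<mu> / 2 * (norm B1)\<^sup>2 - norm g * norm B1) \<le> 2 * K"
    using integral_sq_residual_ge[OF P \<open>K \<ge> 0\<close> _ s(2), of B1] s(1) by (simp add: algebra_simps)
qed (use assms in auto)

lemma sq_residual_diff_eq:
  "sq_residual A B2 p - sq_residual A B1 p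
     = (transpose A *v ((B2 - B1) *v snd p)) \<bullet> (transpose A *v ((B1 + B2) *v snd p) - 2 *\<^sub>R fst p)"
  by (simp add: sq_residual_def power2_norm_eq_inner matrix_vector_mult_diff_rdistrib
      matrix_vector_mult_add_rdistrib matrix_vector_right_distrib matrix_vector_mult_diff_distrib
      inner_diff_left inner_diff_right inner_add_left inner_add_right inner_commute algebra_simps)

lemma sq_residual_diff_lipschitz:
  fixes A :: "real^'n^'m" and p q :: "(real^'n) \<times> (real^'m)"
  shows "\<bar>(sq_residual A B2 p - sq_residual A B1 p) - (sq_residual A B2 q - sq_residual A B1 q)\<bar>
     \<le> norm (transpose A) * norm (B2 - B1) * (norm (transpose A) * norm (B1 + B2) + 2)
       * norm (p - q) * (norm p + norm q)"
  unfolding sq_residual_diff_eq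
proof (rule inner_linear_diff_le)
  show "linear (\<lambda>p. transpose A *v ((B2 - B1) *v snd p))"
    "linear (\<lambda>p. transpose A *v ((B1 + B2) *v snd p) - 2 *\<^sub>R fst p)"
    by (intro linearI; simp add: matrix_vector_right_distrib matrix_vector_mult_scaleR algebra_simps)+
  show "norm (transpose A *v ((B2 - B1) *v snd p)) \<le> norm (transpose A) * norm (B2 - B1) * norm p"
    for p :: "(real^'n) \<times> (real^'m)"
    using norm_matrix_pair_le[where T = "transpose A" and B = "B2 - B1" and s = 0 and p = p] by simp
  show "norm (transpose A *v ((B1 + B2) *v snd p) - 2 *\<^sub>R fst p)
      \<le> (norm (transpose A) * norm (B1 + B2) + 2) * norm p" for p :: "(real^'n) \<times> (real^'m)"
    using norm_matrix_pair_le[where T = "transpose A" and B = "B1 + B2" and s = 2 and p = p] by simp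
qed

lemma minimizers_gap:
  fixes A :: "real^'n^'m" and \<pi> \<pi>' :: "((real^'n) \<times> (real^'m)) measure"
  assumes P: "\<pi> \<in> P_Kc K c" and P': "\<pi>' \<in> P_Kc K c" and "lam \<ge> 0"
    and cvx: "convex_on UNIV (\<lambda>B. rho B - \<mu> / 2 * (norm B)\<^sup>2)"
    and min1: "\<And>B. Fobj A lam rho \<pi> B1 \<le> Fobj A lam rho \<pi> B"
    and min2: "\<And>B. Fobj A lam rho \<pi>' B2 \<le> Fobj A lam rho \<pi>' B"
  shows "lam * \<mu> / 2 * (norm (B2 - B1))\<^sup>2
    \<le> (\<integral>p. sq_residual A B2 p - sq_residual A B1 p \<partial>\<pi>) - (\<integral>p. sq_residual A B2 p - sq_residual A B1 p \<partial>\<pi>')"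
proof -
  have growth: "lam * \<mu> / 4 * (norm (B - B'))\<^sup>2 \<le> Fobj A lam rho \<nu> B - Fobj A lam rho \<nu> B'"
    if "\<nu> \<in> P_Kc K c" "\<And>B. Fobj A lam rho \<nu> B' \<le> Fobj A lam rho \<nu> B" for \<nu> B B'
    using quadratic_growth_at_minimizer[OF convex_on_integral_sq_residual[OF that(1)] cvx \<open>lam \<ge> 0\<close>]
      that(2) by (simp add: Fobj_eq)
  have "(\<integral>p. sq_residual A B2 p - sq_residual A B1 p \<partial>\<nu>)
      = (\<integral>p. sq_residual A B2 p \<partial>\<nu>) - (\<integral>p. sq_residual A B1 p \<partial>\<nu>)" if "\<nu> \<in> P_Kc K c" for \<nu>
    using integrable_sq_residual[OF that] by simp
  with growth[OF P min1, of B2] growth[OF P' min2, of B1] P P' show ?thesis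
    unfolding Fobj_eq by (simp add: norm_minus_commute)
qed

lemma minimizer_stability:
  fixes A :: "real^'n^'m" and \<pi> \<pi>' :: "((real^'n) \<times> (real^'m)) measure"
  assumes P: "\<pi> \<in> P_Kc K c" and P': "\<pi>' \<in> P_Kc K c" and "K \<ge> 0" "lam \<ge> 0"
    and cvx: "convex_on UNIV (\<lambda>B. rho B - \<mu> / 2 * (norm B)\<^sup>2)"
    and min1: "\<And>B. Fobj A lam rho \<pi> B1 \<le> Fobj A lam rho \<pi> B"
    and min2: "\<And>B. Fobj A lam rho \<pi>' B2 \<le> Fobj A lam rho \<pi>' B"
    and R: "norm B1 \<le> R" "norm B2 \<le> R"
  shows "lam * \<mu> * norm (B1 - B2)
    \<le> 4 * norm (transpose A) * (2 * norm (transpose A) * R + 2) * sqrt (2 * K) * W2 \<pi> \<pi>'"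
proof -
  have "R \<ge> 0"
    using R(1) norm_ge_zero order_trans by blast
  define L where "L = norm (transpose A) * (2 * norm (transpose A) * R + 2)"
  define d where "d = B2 - B1"
  define \<phi> where "\<phi> p = sq_residual A B2 p - sq_residual A B1 p" for p
  have "norm (B1 + B2) \<le> 2 * R"
    using norm_triangle_ineq[of B1 B2] R by linarith
  then have "norm (transpose A) * norm (B1 + B2) + 2 \<le> 2 * norm (transpose A) * R + 2"
    using mult_left_mono[of "norm (B1 + B2)" "2 * R" "norm (transpose A)"] by simp
  then have "norm (transpose A) * norm d * (norm (transpose A) * norm (B1 + B2) + 2)
      \<le> norm (transpose A) * norm d * (2 * norm (transpose A) * R + 2)"
    by (rule mult_left_mono) simp
  also have "\<dots> = L * norm d"
    by (simp add: L_def)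
  finally have "norm (transpose A) * norm d * (norm (transpose A) * norm (B1 + B2) + 2) \<le> L * norm d" .
  then have lip: "\<bar>\<phi> p - \<phi> q\<bar> \<le> L * norm d * norm (p - q) * (norm p + norm q)" for p q
    using sq_residual_diff_lipschitz[of A B2 p B1 q] unfolding \<phi>_def d_def
    by (smt (verit) mult_right_mono norm_ge_zero)
  have "integral\<^sup>L \<pi> \<phi> - integral\<^sup>L \<pi>' \<phi> \<le> 2 * (L * norm d) * sqrt (2 * K) * W2 \<pi> \<pi>'"
  proof (rule integral_diff_le_W2[OF _ _ _ _ second_moment_P_Kc[OF P] second_moment_P_Kc[OF P'] _ _ lip])
    show "continuous_on UNIV \<phi>"
      unfolding \<phi>_def sq_residual_def by (intro continuous_intros)
  qed (use P P' \<open>K \<ge> 0\<close> \<open>R \<ge> 0\<close> in \<open>auto simp: P_Kc_def L_def\<close>)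
  with minimizers_gap[OF P P' \<open>lam \<ge> 0\<close> cvx min1 min2]
  have "lam * \<mu> / 2 * norm d * norm d \<le> (2 * L * sqrt (2 * K) * W2 \<pi> \<pi>') * norm d"
    unfolding \<phi>_def d_def by (simp add: power2_eq_square algebra_simps)
  then have "lam * \<mu> / 2 * norm d \<le> 2 * L * sqrt (2 * K) * W2 \<pi> \<pi>'" if "d \<noteq> 0"
    using that by simp
  moreover have "0 \<le> L * sqrt (2 * K) * W2 \<pi> \<pi>'"
    using \<open>R \<ge> 0\<close> \<open>K \<ge> 0\<close> unfolding L_def by (auto intro!: mult_nonneg_nonneg W2_nonneg)
  ultimately show ?thesis
    by (cases "d = 0") (auto simp: d_def norm_minus_commute L_def field_simps)
qed

theorem mainTheorem2:
  fixes A :: "real^'n^'m" and K c \<mu> :: real and g :: "real^'m^'m"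
  assumes "CARD('m) \<le> CARD('n)"
    and "rank A = CARD('m)"
    and "K > 0" and "c > 0" and "\<mu> > 0"
  shows "\<exists>C>0. \<forall>(lam::real) (rho :: real^'m^'m \<Rightarrow> real) \<pi> \<pi>' B1 B2.
     lam > 0 \<longrightarrow>
     (\<forall>B. rho differentiable (at B)) \<longrightarrow>
     convex_on UNIV (\<lambda>B. rho B - \<mu> / 2 * (norm B)\<^sup>2) \<longrightarrow>
     (rho has_derivative (\<lambda>H. g \<bullet> H)) (at 0) \<longrightarrow>
     \<pi> \<in> P_Kc K c \<longrightarrow> \<pi>' \<in> P_Kc K c \<longrightarrow>
     (\<forall>B. Fobj A lam rho \<pi> B1 \<le> Fobj A lam rho \<pi> B) \<longrightarrow>
     (\<forall>B. Fobj A lam rho \<pi>' B2 \<le> Fobj A lam rho \<pi>' B) \<longrightarrow>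
     norm (B1 - B2) \<le> C / (lam * \<mu>) * W2 \<pi> \<pi>'"
proof -
  have "inj ((*v) (transpose A))"
    using assms(2) full_rank_injective rank_transpose by metis
  then obtain s where s: "s > 0" "\<And>v. s * norm v \<le> norm (transpose A *v v)"
    using linear_inj_bounded_below_pos[OF matrix_vector_mul_linear] by blast
  define R where "R = 2 * norm g / \<mu> + sqrt (4 * K / (c * s\<^sup>2))"
  define C where "C = 4 * norm (transpose A) * (2 * norm (transpose A) * R + 2) * sqrt (2 * K) + 1"
  have "R \<ge> 0"
    using assms s by (simp add: R_def)
  then have "C > 0"
    using assms by (auto simp: C_def intro!: add_nonneg_pos mult_nonneg_nonneg)
  show ?thesis
  proof (intro exI[of _ C] conjI allI impI)
    fix lam rho \<pi> \<pi>' B1 B2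
    assume lam: "lam > 0" and cvx: "convex_on UNIV (\<lambda>B. rho B - \<mu> / 2 * (norm B)\<^sup>2)"
      and der: "(rho has_derivative (\<lambda>H. g \<bullet> H)) (at 0)" and P: "\<pi> \<in> P_Kc K c" and P': "\<pi>' \<in> P_Kc K c"
      and min1: "\<forall>B. Fobj A lam rho \<pi> B1 \<le> Fobj A lam rho \<pi> B"
      and min2: "\<forall>B. Fobj A lam rho \<pi>' B2 \<le> Fobj A lam rho \<pi>' B"
    have "norm B1 \<le> R"
      unfolding R_def by (rule norm_minimizer_le[OF P _ _ _ _ s cvx der min1[rule_format]]) (use assms lam in auto)
    moreover have "norm B2 \<le> R"
      unfolding R_def by (rule norm_minimizer_le[OF P' _ _ _ _ s cvx der min2[rule_format]]) (use assms lam in auto)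
    ultimately have "lam * \<mu> * norm (B1 - B2) \<le> (C - 1) * W2 \<pi> \<pi>'"
      unfolding C_def using assms lam
      by (auto intro: minimizer_stability[OF P P' _ _ cvx min1[rule_format] min2[rule_format]])
    also have "\<dots> \<le> C * W2 \<pi> \<pi>'"
      by (simp add: W2_nonneg algebra_simps)
    finally show "norm (B1 - B2) \<le> C / (lam * \<mu>) * W2 \<pi> \<pi>'"
      using lam assms(5) by (simp add: field_simps)
  qed (rule \<open>C > 0\<close>)
qed

end
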